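(* Let $H$ be a non-complete, connected, regular graph. For every $G\in\operatorname{obs}^\ast(H)$ there are distinct vertices $u,v\in V(G)$ that are true twins in $G$ (i.e., $N_G[u]=N_G[v]$) and satisfy $G-u\cong H\cong G-v$.
   Context: All graphs are finite, simple and loopless. $N[x]$ denotes the closed neighbourhood of $x$. A full-homomorphism $\varphi\colon G\to H$ is a map $V(G)\to V(H)$ such that for all $x,y\in V(G)$, $xy\in E(G)$ if and only if $\varphi(x)\varphi(y)\in E(H)$. A full $H$-colouring of $G$ is a full-homomorphism $G\to H$. A minimal $H$-obstruction is a graph $G$ that admits no full $H$-colouring while every proper induced subgraph of $G$ admits one; $\operatorname{obs}(H)$ denotes the set of minimal $H$-obstructions (up to isomorphism), and $\operatorname{obs}^\ast(H)$ the set of minimal $H$-obstructions on exactly $|V(H)|+1$ vertices. *)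

theory Defs
  imports Main
begin

definition sgraph :: "'a set \<Rightarrow> ('a \<Rightarrow> 'a \<Rightarrow> bool) \<Rightarrow> bool" where
  "sgraph V E \<longleftrightarrow> finite V \<and> (\<forall>x y. E x y \<longrightarrow> x \<in> V \<and> y \<in> V)
     \<and> (\<forall>x y. E x y \<longrightarrow> E y x) \<and> (\<forall>x. \<not> E x x)"

definition full_hom :: "'a set \<Rightarrow> ('a \<Rightarrow> 'a \<Rightarrow> bool) \<Rightarrow> 'b set \<Rightarrow> ('b \<Rightarrow> 'b \<Rightarrow> bool)
    \<Rightarrow> ('a \<Rightarrow> 'b) \<Rightarrow> bool" where
  "full_hom V E W F \<phi> \<longleftrightarrow> \<phi> ` V \<subseteq> W \<and> (\<forall>x\<in>V. \<forall>y\<in>V. E x y \<longleftrightarrow> F (\<phi> x) (\<phi> y))"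

definition full_colourable :: "'a set \<Rightarrow> ('a \<Rightarrow> 'a \<Rightarrow> bool) \<Rightarrow> 'b set \<Rightarrow> ('b \<Rightarrow> 'b \<Rightarrow> bool) \<Rightarrow> bool" where
  "full_colourable V E W F \<longleftrightarrow> (\<exists>\<phi>. full_hom V E W F \<phi>)"

definition induced :: "('a \<Rightarrow> 'a \<Rightarrow> bool) \<Rightarrow> 'a set \<Rightarrow> 'a \<Rightarrow> 'a \<Rightarrow> bool" where
  "induced E S = (\<lambda>x y. x \<in> S \<and> y \<in> S \<and> E x y)"

definition min_obstruction :: "'a set \<Rightarrow> ('a \<Rightarrow> 'a \<Rightarrow> bool) \<Rightarrow> 'b set \<Rightarrow> ('b \<Rightarrow> 'b \<Rightarrow> bool) \<Rightarrow> bool" where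
  "min_obstruction V E W F \<longleftrightarrow> sgraph V E \<and> \<not> full_colourable V E W F
     \<and> (\<forall>S. S \<subset> V \<longrightarrow> full_colourable S (induced E S) W F)"

definition in_obs_star :: "'a set \<Rightarrow> ('a \<Rightarrow> 'a \<Rightarrow> bool) \<Rightarrow> 'b set \<Rightarrow> ('b \<Rightarrow> 'b \<Rightarrow> bool) \<Rightarrow> bool" where
  "in_obs_star V E W F \<longleftrightarrow> min_obstruction V E W F \<and> card V = card W + 1"

definition graph_iso :: "'a set \<Rightarrow> ('a \<Rightarrow> 'a \<Rightarrow> bool) \<Rightarrow> 'b set \<Rightarrow> ('b \<Rightarrow> 'b \<Rightarrow> bool) \<Rightarrow> bool" where
  "graph_iso V E W F \<longleftrightarrow> (\<exists>f. bij_betw f V W \<and> (\<forall>x\<in>V. \<forall>y\<in>V. E x y \<longleftrightarrow> F (f x) (f y)))"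

definition closed_nbhd :: "'a set \<Rightarrow> ('a \<Rightarrow> 'a \<Rightarrow> bool) \<Rightarrow> 'a \<Rightarrow> 'a set" where
  "closed_nbhd V E x = {y \<in> V. y = x \<or> E x y}"

definition regular :: "'a set \<Rightarrow> ('a \<Rightarrow> 'a \<Rightarrow> bool) \<Rightarrow> bool" where
  "regular V E \<longleftrightarrow> (\<exists>k. \<forall>x\<in>V. card {y \<in> V. E x y} = k)"

definition connected_graph :: "'a set \<Rightarrow> ('a \<Rightarrow> 'a \<Rightarrow> bool) \<Rightarrow> bool" where
  "connected_graph V E \<longleftrightarrow> V \<noteq> {} \<and> (\<forall>x\<in>V. \<forall>y\<in>V. E\<^sup>*\<^sup>* x y)"

definition complete_graph :: "'a set \<Rightarrow> ('a \<Rightarrow> 'a \<Rightarrow> bool) \<Rightarrow> bool" where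
  "complete_graph V E \<longleftrightarrow> (\<forall>x\<in>V. \<forall>y\<in>V. x \<noteq> y \<longrightarrow> E x y)"

end

theory Submission
  imports Defs
begin

text \<open>Let \<open>H\<close> be \<open>k\<close>-regular and \<open>G \<in> obs\<^sup>*(H)\<close>. Deleting a vertex \<open>z\<close> leaves a full
  \<open>H\<close>-colourable graph on \<open>|V(H)|\<close> vertices; either the colouring is injective, and then
  \<open>G - z \<cong> H\<close>, or two vertices get the same colour, and since \<open>G\<close> has no false twins they
  are told apart by \<open>z\<close> alone. A vertex of maximum degree shows that some \<open>G - w \<cong> H\<close>.
  Then every other vertex has degree \<open>k\<close> or \<open>k + 1\<close> according to its adjacency to \<open>w\<close>.
  If \<open>w\<close> were the only such vertex, every \<open>z \<noteq> w\<close> would separate a pair of vertices whose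
  degrees differ by one, which forces \<open>w\<close> to be adjacent to all or to none of the other
  vertices; so \<open>H\<close> would be \<open>K\<^sub>n\<close> or a connected \<open>1\<close>-regular graph, i.e. complete.
  Hence there is a second vertex \<open>z\<close> with \<open>G - z \<cong> H\<close>; degree counting shows that \<open>w\<close> and
  \<open>z\<close> have the same neighbours outside \<open>{w, z}\<close>, and as they are not false twins they are
  true twins.\<close>

lemma sgraphD:
  assumes "sgraph V E"
  shows "finite V" and "E x y \<Longrightarrow> x \<in> V" and "E x y \<Longrightarrow> y \<in> V" and "\<not> E x x"
  using assms unfolding sgraph_def by auto

lemma sgraph_commute:
  assumes "sgraph V E"
  shows "E x y \<longleftrightarrow> E y x"
  using assms unfolding sgraph_def by blast

definition degree :: "'a set \<Rightarrow> ('a \<Rightarrow> 'a \<Rightarrow> bool) \<Rightarrow> 'a \<Rightarrow> nat" where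
  "degree V E x = card {y \<in> V. E x y}"

lemma regular_degreeE:
  assumes "regular V E"
  obtains k where "\<forall>x\<in>V. degree V E x = k"
  using assms unfolding regular_def degree_def by blast

lemma degree_deletion_iso:
  assumes G: "sgraph V E" and iso: "graph_iso (V - {u}) (induced E (V - {u})) W F"
    and reg: "\<forall>a\<in>W. degree W F a = k" and t: "t \<in> V - {u}"
  shows "degree V E t = k + (if E t u then 1 else 0)"
proof -
  obtain f where bij: "bij_betw f (V - {u}) W"
    and f: "\<And>x y. x \<in> V - {u} \<Longrightarrow> y \<in> V - {u} \<Longrightarrow> E x y \<longleftrightarrow> F (f x) (f y)"
    using iso unfolding graph_iso_def induced_def by auto
  let ?N = "{y \<in> V - {u}. E t y}"
  have "bij_betw f ?N {b \<in> W. F (f t) b}"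
    using bij f t by (auto simp: bij_betw_def inj_on_def)
  then have "card ?N = k"
    using reg bij t by (simp add: bij_betw_same_card degree_def bij_betwE)
  moreover have "{y \<in> V. E t y} = ?N \<union> (if E t u then {u} else {})"
    using sgraphD(3)[OF G] by auto
  ultimately show ?thesis
    using sgraphD(1)[OF G] by (simp add: degree_def)
qed

lemma complete_graph_if_degree_eq_card_minus_1:
  assumes W: "sgraph W F" and deg: "\<forall>a\<in>W. degree W F a + 1 = card W"
  shows "complete_graph W F"
  unfolding complete_graph_def
proof (intro ballI impI)
  fix a b assume "a \<in> W" "b \<in> W" "a \<noteq> b"
  have "{c \<in> W. F a c} \<subseteq> W - {a}"
    using sgraphD(4)[OF W] by auto
  moreover have "card {c \<in> W. F a c} = card (W - {a})"
    using deg \<open>a \<in> W\<close> sgraphD(1)[OF W] unfolding degree_def by fastforce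
  ultimately have "{c \<in> W. F a c} = W - {a}"
    using sgraphD(1)[OF W] by (intro card_subset_eq) auto
  with \<open>b \<in> W\<close> \<open>a \<noteq> b\<close> show "F a b" by blast
qed

lemma connected_1_regular_complete:
  assumes W: "sgraph W F" and con: "connected_graph W F" and reg: "\<forall>a\<in>W. degree W F a = 1"
  shows "complete_graph W F"
  unfolding complete_graph_def
proof (intro ballI impI)
  fix a b assume a: "a \<in> W" and b: "b \<in> W" and "a \<noteq> b"
  have "card {x \<in> W. F a x} = 1"
    using reg a unfolding degree_def by blast
  then obtain c where c: "{x \<in> W. F a x} = {c}"
    by (rule card_1_singletonE)
  then have "F a c" and "c \<in> W" by auto
  then have "a \<in> {x \<in> W. F c x}"
    using a sgraph_commute[OF W] by auto
  then have c': "{x \<in> W. F c x} = {a}"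
    using reg \<open>c \<in> W\<close> unfolding degree_def by (metis card_1_singletonE singletonD)
  have "y \<in> {a, c}" if "F\<^sup>*\<^sup>* a y" for y
    using that
  proof (induction rule: rtranclp_induct)
    case (step y z)
    then show ?case using c c' sgraphD(3)[OF W] by blast
  qed simp
  moreover have "F\<^sup>*\<^sup>* a b"
    using con a b unfolding connected_graph_def by blast
  ultimately show "F a b"
    using \<open>a \<noteq> b\<close> \<open>F a c\<close> by auto
qed

lemma full_hom_induced_iff:
  "full_hom S (induced E S) W F \<phi> \<longleftrightarrow> \<phi> ` S \<subseteq> W \<and> (\<forall>x\<in>S. \<forall>y\<in>S. E x y \<longleftrightarrow> F (\<phi> x) (\<phi> y))"
  unfolding full_hom_def induced_def by auto

lemma inj_full_hom_graph_iso:
  assumes "finite W" and "card V = card W" and "inj_on \<phi> V" and "full_hom V E W F \<phi>"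
  shows "graph_iso V E W F"
proof -
  have "\<phi> ` V = W"
    using assms by (intro card_subset_eq) (auto simp: full_hom_def card_image)
  then show ?thesis
    using assms unfolding graph_iso_def full_hom_def bij_betw_def by blast
qed

lemma min_obstruction_deletion_colourable:
  assumes "min_obstruction V E W F" and "z \<in> V"
  obtains \<phi> where "full_hom (V - {z}) (induced E (V - {z})) W F \<phi>"
  using assms unfolding min_obstruction_def full_colourable_def by blast

lemma full_hom_extend_false_twin:
  assumes G: "sgraph V E" and \<phi>: "full_hom (V - {x}) (induced E (V - {x})) W F \<phi>"
    and y: "y \<in> V - {x}" and twin: "\<forall>t\<in>V. E x t \<longleftrightarrow> E y t"
  shows "full_hom V E W F (\<phi>(x := \<phi> y))"
proof -
  define r where "r a = (if a = x then y else a)" for a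
  have r: "r a \<in> V - {x}" "(\<phi>(x := \<phi> y)) a = \<phi> (r a)" if "a \<in> V" for a
    using that y by (auto simp: r_def)
  have "E a b \<longleftrightarrow> E (r a) (r b)" if "a \<in> V" "b \<in> V" for a b
    using that twin sgraphD(4)[OF G] sgraph_commute[OF G] by (auto simp: r_def)
  moreover have "E (r a) (r b) \<longleftrightarrow> F (\<phi> (r a)) (\<phi> (r b))" if "a \<in> V" "b \<in> V" for a b
    using \<phi> r that unfolding full_hom_induced_iff by blast
  ultimately show ?thesis
    using \<phi> r unfolding full_hom_induced_iff full_hom_def by (auto simp del: fun_upd_apply)
qed

lemma min_obstruction_no_false_twins:
  assumes mo: "min_obstruction V E W F" and "x \<in> V" "y \<in> V" "x \<noteq> y"
  shows "\<exists>t\<in>V. E x t \<noteq> E y t"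
proof (rule ccontr)
  assume "\<not> ?thesis"
  then have twin: "\<forall>t\<in>V. E x t \<longleftrightarrow> E y t" by blast
  have G: "sgraph V E" and "\<not> full_colourable V E W F"
    using mo unfolding min_obstruction_def by auto
  moreover obtain \<phi> where "full_hom (V - {x}) (induced E (V - {x})) W F \<phi>"
    using min_obstruction_deletion_colourable[OF mo \<open>x \<in> V\<close>] .
  ultimately show False
    using full_hom_extend_false_twin[OF G _ _ twin] assms(3,4)
    unfolding full_colourable_def by blast
qed

lemma min_obstruction_true_twins:
  assumes mo: "min_obstruction V E W F" and reg: "\<forall>a\<in>W. degree W F a = k"
    and "w \<in> V" "z \<in> V" "w \<noteq> z"
    and iso_w: "graph_iso (V - {w}) (induced E (V - {w})) W F"
    and iso_z: "graph_iso (V - {z}) (induced E (V - {z})) W F"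
  shows "closed_nbhd V E w = closed_nbhd V E z"
proof -
  have G: "sgraph V E"
    using mo unfolding min_obstruction_def by blast
  have agree: "E w t \<longleftrightarrow> E z t" if "t \<in> V - {w, z}" for t
    using degree_deletion_iso[OF G iso_w reg, of t] degree_deletion_iso[OF G iso_z reg, of t]
      that sgraph_commute[OF G] by (auto split: if_splits)
  have "E w z"
  proof (rule ccontr)
    assume "\<not> E w z"
    then have "\<forall>t\<in>V. E w t \<longleftrightarrow> E z t"
      using agree sgraphD(4)[OF G] sgraph_commute[OF G] by blast
    then show False
      using min_obstruction_no_false_twins[OF mo] assms(3-5) by blast
  qed
  then show ?thesis
    using agree assms(3,4) sgraph_commute[OF G] unfolding closed_nbhd_def by auto
qed

definition sole_distinguisher :: "'a set \<Rightarrow> ('a \<Rightarrow> 'a \<Rightarrow> bool) \<Rightarrow> 'a \<Rightarrow> 'a \<Rightarrow> 'a \<Rightarrow> bool" where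
  "sole_distinguisher V E z x y \<longleftrightarrow> x \<in> V - {z} \<and> y \<in> V - {z} \<and> E z x \<and> \<not> E z y
     \<and> (\<forall>t\<in>V - {z}. E x t \<longleftrightarrow> E y t)"

lemma sole_distinguisher_not_adjacent:
  assumes "sgraph V E" and "sole_distinguisher V E z x y"
  shows "\<not> E x y" and "\<not> E y x"
  using assms sgraphD(4)[OF assms(1)] unfolding sole_distinguisher_def by blast+

lemma degree_sole_distinguisher:
  assumes "sgraph V E" and "sole_distinguisher V E z x y"
  shows "degree V E x = degree V E y + 1"
proof -
  have "{t \<in> V. E x t} = insert z {t \<in> V. E y t}" and "z \<notin> {t \<in> V. E y t}"
    using assms sgraphD(2)[OF assms(1)] sgraph_commute[OF assms(1)]
    unfolding sole_distinguisher_def by auto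
  then show ?thesis
    using sgraphD(1)[OF assms(1)] by (simp add: degree_def)
qed

lemma degree_dichotomy_at_sole_distinguisher:
  assumes G: "sgraph V E" and iso: "graph_iso (V - {w}) (induced E (V - {w})) W F"
    and reg: "\<forall>a\<in>W. degree W F a = k" and "w \<in> V" "z \<noteq> w"
    and sd: "sole_distinguisher V E z x y"
  shows "E w z \<and> degree V E w = k + 1 \<or> \<not> E w z \<and> degree V E w + 1 = k"
proof -
  have deg: "degree V E t = k + (if E t w then 1 else 0)" if "t \<in> V" "t \<noteq> w" for t
    using degree_deletion_iso[OF G iso reg] that by blast
  have xy: "x \<in> V" "y \<in> V" "E z x" "\<not> E z y" "\<not> E x y" "\<not> E y x"
    using sd sole_distinguisher_not_adjacent[OF G sd] unfolding sole_distinguisher_def by auto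
  have dxy: "degree V E x = degree V E y + 1"
    using degree_sole_distinguisher[OF G sd] .
  consider "x \<noteq> w" "y \<noteq> w" | "y = w" | "x = w"
    by blast
  then show ?thesis
  proof cases
    case 1
    have "E x w \<longleftrightarrow> E y w"
      using sd \<open>w \<in> V\<close> \<open>z \<noteq> w\<close> unfolding sole_distinguisher_def by blast
    then show ?thesis
      using dxy deg[OF xy(1) 1(1)] deg[OF xy(2) 1(2)] by (simp split: if_splits)
  next
    case 2
    with xy dxy deg[of x] show ?thesis
      using sgraph_commute[OF G] by auto
  next
    case 3
    with xy dxy deg[of y] show ?thesis
      using sgraph_commute[OF G] by auto
  qed
qed

lemma obs_star_deletion_iso_or_sole_distinguisher:
  assumes obs: "in_obs_star V E W F" and "finite W" and z: "z \<in> V"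
  shows "graph_iso (V - {z}) (induced E (V - {z})) W F \<or> (\<exists>x y. sole_distinguisher V E z x y)"
proof -
  have mo: "min_obstruction V E W F" and "card V = card W + 1"
    using obs unfolding in_obs_star_def by auto
  then have "finite V"
    using sgraphD(1) unfolding min_obstruction_def by blast
  obtain \<phi> where \<phi>: "full_hom (V - {z}) (induced E (V - {z})) W F \<phi>"
    using min_obstruction_deletion_colourable[OF mo z] .
  show ?thesis
  proof (cases "inj_on \<phi> (V - {z})")
    case True
    have "card (V - {z}) = card W"
      using \<open>card V = card W + 1\<close> \<open>finite V\<close> z by simp
    then show ?thesis
      using inj_full_hom_graph_iso[OF \<open>finite W\<close> _ True \<phi>] by blast
  next
    case False
    then obtain x y where xy: "x \<in> V - {z}" "y \<in> V - {z}" "x \<noteq> y" "\<phi> x = \<phi> y"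
      unfolding inj_on_def by blast
    then have agree: "\<forall>t\<in>V - {z}. E x t \<longleftrightarrow> E y t"
      using \<phi> unfolding full_hom_induced_iff by metis
    then have "E x z \<noteq> E y z"
      using min_obstruction_no_false_twins[OF mo, of x y] xy by auto
    then have "sole_distinguisher V E z x y \<or> sole_distinguisher V E z y x"
      using xy agree mo sgraph_commute
      unfolding sole_distinguisher_def min_obstruction_def by metis
    then show ?thesis by blast
  qed
qed

lemma obs_star_exists_deletion_iso:
  assumes obs: "in_obs_star V E W F" and "finite W"
  shows "\<exists>w\<in>V. graph_iso (V - {w}) (induced E (V - {w})) W F"
proof (rule ccontr)
  assume "\<not> ?thesis"
  then have distinguisher: "\<exists>x y. sole_distinguisher V E z x y" if "z \<in> V" for z
    using obs_star_deletion_iso_or_sole_distinguisher[OF obs \<open>finite W\<close> that] that by blast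
  have G: "sgraph V E" and "V \<noteq> {}"
    using obs unfolding in_obs_star_def min_obstruction_def by auto
  have "Max (degree V E ` V) \<in> degree V E ` V"
    using sgraphD(1)[OF G] \<open>V \<noteq> {}\<close> by simp
  then obtain x where x: "x \<in> V" and "degree V E x = Max (degree V E ` V)"
    by auto
  then have max: "degree V E a \<le> degree V E x" if "a \<in> V" for a
    using sgraphD(1)[OF G] that by simp
  obtain p q where pq: "sole_distinguisher V E x p q"
    using distinguisher[OF x] by blast
  then obtain a b where ab: "sole_distinguisher V E q a b"
    using distinguisher unfolding sole_distinguisher_def by blast
  have "a \<noteq> x" and "p \<noteq> q"
    using pq ab sgraph_commute[OF G] unfolding sole_distinguisher_def by auto
  then have "E p a" and "E a p"
    using pq ab sgraph_commute[OF G] unfolding sole_distinguisher_def by auto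
  then have "E b p"
    using ab \<open>p \<noteq> q\<close> pq sgraph_commute[OF G] unfolding sole_distinguisher_def by auto
  then have "b = x"
    using pq ab sgraph_commute[OF G] unfolding sole_distinguisher_def by auto
  then have "degree V E a = degree V E x + 1"
    using degree_sole_distinguisher[OF G ab] by simp
  moreover have "a \<in> V"
    using ab unfolding sole_distinguisher_def by blast
  ultimately show False
    using max by fastforce
qed

lemma obs_star_second_deletion_iso:
  assumes obs: "in_obs_star V E W F" and H: "sgraph W F" "connected_graph W F"
    "\<not> complete_graph W F" and reg: "\<forall>a\<in>W. degree W F a = k"
    and w: "w \<in> V" and iso: "graph_iso (V - {w}) (induced E (V - {w})) W F"
  shows "\<exists>z\<in>V - {w}. graph_iso (V - {z}) (induced E (V - {z})) W F"
proof (rule ccontr)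
  assume no_other: "\<not> ?thesis"
  have G: "sgraph V E" and card: "card V = card W + 1"
    using obs unfolding in_obs_star_def min_obstruction_def by auto
  have "finite W"
    using sgraphD(1)[OF H(1)] .
  have dich: "E w z \<and> degree V E w = k + 1 \<or> \<not> E w z \<and> degree V E w + 1 = k"
    if z: "z \<in> V - {w}" for z
  proof -
    obtain x y where "sole_distinguisher V E z x y"
      using obs_star_deletion_iso_or_sole_distinguisher[OF obs \<open>finite W\<close>] no_other z
      by blast
    then show ?thesis
      using degree_dichotomy_at_sole_distinguisher[OF G iso reg w] z by blast
  qed
  have "W \<noteq> {}"
    using H(2) unfolding connected_graph_def by blast
  moreover have "card (V - {w}) = card W"
    using card w by simp
  ultimately have "V - {w} \<noteq> {}"
    using \<open>finite W\<close> by (metis card.empty card_0_eq)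
  then obtain z0 where z0: "z0 \<in> V - {w}"
    by blast
  show False
  proof (cases "E w z0")
    case True
    then have "{z \<in> V. E w z} = V - {w}"
      using dich[OF z0] dich sgraphD(4)[OF G] by fastforce
    then have "k + 1 = card W"
      using dich[OF z0] True card w sgraphD(1)[OF G] by (simp add: degree_def)
    then have "complete_graph W F"
      using complete_graph_if_degree_eq_card_minus_1[OF H(1)] reg by simp
    with H(3) show False ..
  next
    case False
    then have "{z \<in> V. E w z} = {}"
      using dich[OF z0] dich sgraphD(4)[OF G] by fastforce
    then have "degree V E w = 0"
      unfolding degree_def by (metis card.empty)
    then have "k = 1"
      using dich[OF z0] False by simp
    then have "complete_graph W F"
      using connected_1_regular_complete[OF H(1,2)] reg by simp
    with H(3) show False ..
  qed
qed

theorem lemma3p3: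
  fixes VH :: "'b set" and EH :: "'b \<Rightarrow> 'b \<Rightarrow> bool"
    and VG :: "'a set" and EG :: "'a \<Rightarrow> 'a \<Rightarrow> bool"
  assumes "sgraph VH EH"
    and "\<not> complete_graph VH EH"
    and "connected_graph VH EH"
    and "regular VH EH"
    and "in_obs_star VG EG VH EH"
  shows "\<exists>u\<in>VG. \<exists>v\<in>VG. u \<noteq> v \<and> closed_nbhd VG EG u = closed_nbhd VG EG v
           \<and> graph_iso (VG - {u}) (induced EG (VG - {u})) VH EH
           \<and> graph_iso (VG - {v}) (induced EG (VG - {v})) VH EH"
proof -
  obtain k where reg: "\<forall>a\<in>VH. degree VH EH a = k"
    using regular_degreeE[OF assms(4)] .
  obtain w where w: "w \<in> VG" and iso_w: "graph_iso (VG - {w}) (induced EG (VG - {w})) VH EH"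
    using obs_star_exists_deletion_iso[OF assms(5) sgraphD(1)[OF assms(1)]] by blast
  obtain z where z: "z \<in> VG" "w \<noteq> z"
    and iso_z: "graph_iso (VG - {z}) (induced EG (VG - {z})) VH EH"
    using obs_star_second_deletion_iso[OF assms(5,1,3,2) reg w iso_w] by blast
  have "min_obstruction VG EG VH EH"
    using assms(5) unfolding in_obs_star_def by blast
  then have "closed_nbhd VG EG w = closed_nbhd VG EG z"
    using min_obstruction_true_twins[OF _ reg w z iso_w iso_z] by simp
  with w z iso_w iso_z show ?thesis
    by blast
qed

end
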